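(* Let $G$ be a finite group and let $M,N$ be normal subgroups with $1<M\le N<G$ such that every $g\in G\setminus N$ is conjugate in $G$ to every element of $gM$. Let $Z_1=Z(G)$ and, for $i>1$, let $Z_i$ be defined by $Z_i/Z_{i-1}=Z(G/Z_{i-1})$. If $m\ge 1$ and $Z_m<M$, then $Z_{m+1}\le N$. *)

theory Defs
  imports "HOL-Algebra.Algebra"
begin

text \<open>Upper central series: uZ G 0 = {1}, and uZ G (Suc i) is the preimage in G of the
  centre of G / uZ G i, i.e. the elements g whose commutators with all of G lie in uZ G i.
  So uZ G 1 = Z(G), and uZ G (i+1) / uZ G i = Z(G / uZ G i).\<close>
primrec upper_central :: "('a, 'b) monoid_scheme \<Rightarrow> nat \<Rightarrow> 'a set" where
  "upper_central G 0 = {\<one>\<^bsub>G\<^esub>}"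
| "upper_central G (Suc i) = {g \<in> carrier G. \<forall>h \<in> carrier G.
      g \<otimes>\<^bsub>G\<^esub> h \<otimes>\<^bsub>G\<^esub> inv\<^bsub>G\<^esub> g \<otimes>\<^bsub>G\<^esub> inv\<^bsub>G\<^esub> h \<in> upper_central G i}"

definition conjugate_in :: "('a, 'b) monoid_scheme \<Rightarrow> 'a \<Rightarrow> 'a \<Rightarrow> bool" where
  "conjugate_in G x y \<longleftrightarrow> (\<exists>c \<in> carrier G. y = c \<otimes>\<^bsub>G\<^esub> x \<otimes>\<^bsub>G\<^esub> inv\<^bsub>G\<^esub> c)"

end

theory Submission
  imports Defs
begin

text \<open>If some \<open>g \<in> Z\<^sub>m\<^sub>+\<^sub>1\<close> lay outside \<open>N\<close>, then so would \<open>g\<inverse>\<close>, and each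
  \<open>g\<inverse>y\<close> with \<open>y \<in> M\<close> would be a conjugate \<open>c g\<inverse> c\<inverse>\<close> of \<open>g\<inverse>\<close>.  Then
  \<open>y = g c g\<inverse> c\<inverse>\<close> is a commutator of \<open>g\<close>, hence lies in \<open>Z\<^sub>m\<close>; so
  \<open>M \<subseteq> Z\<^sub>m\<close>, contradicting \<open>Z\<^sub>m < M\<close>.\<close>

lemma (in group) commutator_if_conjugate_to_coset_element:
  assumes g: "g \<in> carrier G" and y: "y \<in> carrier G"
    and conj: "conjugate_in G (inv g) (inv g \<otimes> y)"
  shows "\<exists>c \<in> carrier G. y = g \<otimes> c \<otimes> inv g \<otimes> inv c"
proof -
  from conj obtain c where c: "c \<in> carrier G" and e: "inv g \<otimes> y = c \<otimes> inv g \<otimes> inv c"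
    unfolding conjugate_in_def by blast
  have "y = g \<otimes> (inv g \<otimes> y)" using g y by (simp add: m_assoc[symmetric])
  also have "\<dots> = g \<otimes> c \<otimes> inv g \<otimes> inv c" using e g c by (simp add: m_assoc)
  finally show ?thesis using c by blast
qed

lemma (in group) subset_upper_central_if_coset_conjugate:
  assumes g: "g \<in> upper_central G (Suc i)" and M: "M \<subseteq> carrier G"
    and conj: "\<forall>y \<in> inv g <# M. conjugate_in G (inv g) y"
  shows "M \<subseteq> upper_central G i"
proof
  fix y assume "y \<in> M"
  moreover have "g \<in> carrier G" using g by simp
  moreover have "conjugate_in G (inv g) (inv g \<otimes> y)"
    using conj \<open>y \<in> M\<close> unfolding l_coset_def by blast
  ultimately obtain c where "c \<in> carrier G" and "y = g \<otimes> c \<otimes> inv g \<otimes> inv c"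
    using M commutator_if_conjugate_to_coset_element by blast
  then show "y \<in> upper_central G i" using g by simp
qed

theorem mainTheorem10:
  fixes G (structure) and M N :: "'a set" and m :: nat
  assumes "group G" and "finite (carrier G)"
    and "M \<lhd> G" and "N \<lhd> G"
    and "M \<noteq> {\<one>}" and "M \<subseteq> N" and "N \<noteq> carrier G"
    and "\<forall>g \<in> carrier G - N. \<forall>y \<in> g <# M. conjugate_in G g y"
    and "m \<ge> 1"
    and "upper_central G m \<subseteq> M" and "upper_central G m \<noteq> M"
  shows "upper_central G (Suc m) \<subseteq> N"
proof
  interpret group G by fact
  interpret N: normal N G by fact
  interpret M: normal M G by fact
  fix g assume g: "g \<in> upper_central G (Suc m)"
  hence g_carrier: "g \<in> carrier G" by simp
  show "g \<in> N"
  proof (rule ccontr)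
    assume "g \<notin> N"
    hence "inv g \<in> carrier G - N"
      using g_carrier N.subgroup_axioms by (metis DiffI inv_closed inv_inv subgroup.m_inv_closed)
    hence "M \<subseteq> upper_central G m"
      using assms(8) g M.subset subset_upper_central_if_coset_conjugate by simp
    with assms(10,11) show False by blast
  qed
qed

end
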